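(* Let $\mathcal{X}$ be a fuzzy random variable with values in $\mathcal{F}_c(\mathbb{R})$ such that $\mathrm{E}[\|\mathcal{X}_0\|]<\infty$. Then $D_1$ satisfies property P3b for the metric $\rho_1$: for every $A\in\mathcal{F}_c(\mathbb{R})$ with $D_1(A;\mathcal{X})=\sup\{D_1(B;\mathcal{X}):B\in\mathcal{F}_c(\mathbb{R})\}$ and all $U,V\in\mathcal{F}_c(\mathbb{R})$ with $\rho_1(A,V)=\rho_1(A,U)+\rho_1(U,V)$, we have $D_1(A;\mathcal{X})\ge D_1(U;\mathcal{X})\ge D_1(V;\mathcal{X})$.
   Context: $\mathcal{F}_c(\mathbb{R})$ is the set of functions $A:\mathbb{R}\to[0,1]$ whose $\alpha$-levels $A_\alpha=\{x:A(x)\ge\alpha\}$ ($\alpha\in(0,1]$) and $A_0=\overline{\{x:A(x)>0\}}$ are non-empty compact intervals. Support function: $s_A(u,\alpha)=\sup\{uv:v\in A_\alpha\}$, $u\in\{-1,1\}$, $\alpha\in[0,1]$. A fuzzy random variable on $(\Omega,\mathcal{A},\mathbb{P})$ is a map $\mathcal{X}:\Omega\to\mathcal{F}_c(\mathbb{R})$ with each $\omega\mapsto\mathcal{X}(\omega)_\alpha$ a random compact set; $\|\mathcal{X}_0\|=\sup\{|x|:x\in\mathcal{X}(\cdot)_0\}$. $\rho_1(A,B)=\int_{\{-1,1\}}\int_0^1|s_A(u,\alpha)-s_B(u,\alpha)|\,d\alpha\,d\mathcal{V}(u)$, $\mathcal{V}$ uniform on $\{-1,1\}$. The 1-natural depth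 is $D_1(A;\mathcal{X})=(1+\mathrm{E}[\rho_1(A,\mathcal{X})])^{-1}$ (set to $0$ if the expectation is infinite). *)

theory Defs
  imports "HOL-Probability.Probability"
begin

type_synonym fuzzy = "real \<Rightarrow> real"

definition lev :: "fuzzy \<Rightarrow> real \<Rightarrow> real set" where
  "lev A \<alpha> = (if \<alpha> = 0 then closure {x. 0 < A x} else {x. \<alpha> \<le> A x})"

definition Fc :: "fuzzy set" where
  "Fc = {A. (\<forall>x. 0 \<le> A x \<and> A x \<le> 1) \<and>
            (\<forall>\<alpha>\<in>{0..1}. lev A \<alpha> \<noteq> {} \<and> compact (lev A \<alpha>) \<and> is_interval (lev A \<alpha>))}"

text \<open>support function, u in {-1,1}\<close>
definition supp_fun :: "fuzzy \<Rightarrow> real \<Rightarrow> real \<Rightarrow> real" where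
  "supp_fun A u \<alpha> = Sup ((\<lambda>v. u * v) ` lev A \<alpha>)"

text \<open>rho_1 metric, V uniform on {-1,1}\<close>
definition rho1 :: "fuzzy \<Rightarrow> fuzzy \<Rightarrow> real" where
  "rho1 A B = (\<Sum>u\<in>{-1, 1::real}.
      (1/2) * (LBINT \<alpha>:{0..1}. \<bar>supp_fun A u \<alpha> - supp_fun B u \<alpha>\<bar>))"

text \<open>random compact set (Effros measurability)\<close>
definition random_compact_set :: "'w measure \<Rightarrow> ('w \<Rightarrow> real set) \<Rightarrow> bool" where
  "random_compact_set M C \<longleftrightarrow>
     (\<forall>\<omega>\<in>space M. compact (C \<omega>) \<and> C \<omega> \<noteq> {}) \<and>
     (\<forall>K. compact K \<longrightarrow> {\<omega>\<in>space M. C \<omega> \<inter> K \<noteq> {}} \<in> sets M)"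

definition fuzzy_rv :: "'w measure \<Rightarrow> ('w \<Rightarrow> fuzzy) \<Rightarrow> bool" where
  "fuzzy_rv M X \<longleftrightarrow> (\<forall>\<omega>\<in>space M. X \<omega> \<in> Fc) \<and>
     (\<forall>\<alpha>\<in>{0..1}. random_compact_set M (\<lambda>\<omega>. lev (X \<omega>) \<alpha>))"

definition norm0 :: "fuzzy \<Rightarrow> real" where
  "norm0 A = Sup ((\<lambda>x. \<bar>x\<bar>) ` lev A 0)"

definition D1 :: "'w measure \<Rightarrow> ('w \<Rightarrow> fuzzy) \<Rightarrow> fuzzy \<Rightarrow> real" where
  "D1 M X A = (let e = (\<integral>\<^sup>+ \<omega>. ennreal (rho1 A (X \<omega>)) \<partial>M) in
                if e = \<infinity> then 0 else 1 / (1 + enn2real e))"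

end

theory Submission
  imports Defs
begin

(* By Tonelli, E rho_1(B, X) = 1/2 sum_u int_0^1 E|s_B(u,a) - s_X(u,a)| da. For fixed u and a,
   g(t) = E|t - s_X(u,a)| is convex with minimum at a median m(u,a) of s_X(u,a). The medians are
   antitone and left continuous in a, with m(1,a) + m(-1,a) >= 0, so they are the support function
   of a fuzzy set Med. If rho_1(A,V) = rho_1(A,U) + rho_1(U,V), then s_U(u,a) lies between s_A(u,a)
   and s_V(u,a) for almost every a, so g(s_U) + g(m) <= g(s_V) + g(s_A) by convexity; integrating,
   E rho_1(U,X) + E rho_1(Med,X) <= E rho_1(V,X) + E rho_1(A,X). A deepest A has
   E rho_1(A,X) <= E rho_1(Med,X), hence E rho_1(U,X) <= E rho_1(V,X). *)

section \<open>Support functions of elements of \<open>F\<^sub>c\<close>\<close>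

lemma lev_antimono:
  assumes "0 \<le> \<beta>" "\<beta> \<le> \<alpha>" "0 < \<alpha>"
  shows "lev B \<alpha> \<subseteq> lev B \<beta>"
proof (cases "\<beta> = 0")
  case True
  have "{x. \<alpha> \<le> B x} \<subseteq> closure {x. 0 < B x}"
    using assms closure_subset by fastforce
  then show ?thesis using True assms by (simp add: lev_def)
qed (use assms in \<open>auto simp: lev_def\<close>)

lemma Fc_levD:
  assumes "B \<in> Fc" "\<alpha> \<in> {0..1}"
  shows "lev B \<alpha> \<noteq> {}" "compact (lev B \<alpha>)" "is_interval (lev B \<alpha>)"
  using assms by (auto simp: Fc_def)

lemma compact_scaled_lev:
  assumes "B \<in> Fc" "\<alpha> \<in> {0..1}"
  shows "compact ((\<lambda>v. u * v) ` lev B \<alpha>)"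
  by (rule compact_continuous_image) (auto intro!: continuous_intros Fc_levD[OF assms])

lemma supp_fun_ge:
  assumes "B \<in> Fc" "\<alpha> \<in> {0..1}" "v \<in> lev B \<alpha>"
  shows "u * v \<le> supp_fun B u \<alpha>"
  unfolding supp_fun_def using assms
  by (intro cSup_upper imageI bounded_imp_bdd_above compact_imp_bounded compact_scaled_lev)

lemma supp_fun_attained:
  assumes "B \<in> Fc" "\<alpha> \<in> {0..1}"
  obtains v where "v \<in> lev B \<alpha>" "supp_fun B u \<alpha> = u * v"
proof -
  let ?S = "(\<lambda>v. u * v) ` lev B \<alpha>"
  have "Sup ?S \<in> ?S"
    using compact_scaled_lev[OF assms] Fc_levD(1)[OF assms]
    by (intro closed_contains_Sup compact_imp_closed bounded_imp_bdd_above compact_imp_bounded) auto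
  then show ?thesis using that by (auto simp: supp_fun_def)
qed

lemma supp_fun_antimono:
  assumes "B \<in> Fc" "0 \<le> \<beta>" "\<beta> \<le> \<alpha>" "\<alpha> \<le> 1"
  shows "supp_fun B u \<alpha> \<le> supp_fun B u \<beta>"
proof (cases "\<alpha> = \<beta>")
  case False
  have "\<alpha> \<in> {0..1}" using assms by auto
  then obtain v where v: "v \<in> lev B \<alpha>" "supp_fun B u \<alpha> = u * v"
    by (rule supp_fun_attained[OF assms(1)])
  have "v \<in> lev B \<beta>" using lev_antimono[of \<beta> \<alpha> B] False assms v by auto
  then show ?thesis using v supp_fun_ge[OF assms(1)] assms by auto
qed simp

text \<open>The levels \<open>B\<^sub>\<beta>\<close>, \<open>\<beta> < \<alpha>\<close>, are intervals sharing a point \<open>w\<close> of \<open>B\<^sub>\<alpha>\<close>; unless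
  \<open>c \<le> u w\<close>, each of them therefore contains \<open>u c\<close>, whence \<open>B(u c) \<ge> \<alpha>\<close>.\<close>
lemma supp_fun_left_closed:
  assumes B: "B \<in> Fc" and u: "u \<in> {-1, 1}" and \<alpha>: "0 < \<alpha>" "\<alpha> \<le> 1"
    and below: "\<forall>\<beta>\<in>{0<..<\<alpha>}. c \<le> supp_fun B u \<beta>"
  shows "c \<le> supp_fun B u \<alpha>"
proof -
  obtain w where w: "w \<in> lev B \<alpha>" using Fc_levD(1)[OF B, of \<alpha>] \<alpha> by auto
  show ?thesis
  proof (cases "c \<le> u * w")
    case True
    then show ?thesis using supp_fun_ge[OF B _ w, of u] \<alpha> by auto
  next
    case False
    have "u * c \<in> lev B \<beta>" if \<beta>: "\<beta> \<in> {0<..<\<alpha>}" for \<beta>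
    proof -
      obtain v where v: "v \<in> lev B \<beta>" "supp_fun B u \<beta> = u * v"
        using supp_fun_attained[OF B, of \<beta>] \<beta> \<alpha> by auto
      have "w \<in> lev B \<beta>" using lev_antimono[of \<beta> \<alpha> B] \<beta> w by auto
      have iv: "is_interval (lev B \<beta>)" using Fc_levD(3)[OF B, of \<beta>] \<beta> \<alpha> by simp
      have "c \<le> u * v" using below \<beta> unfolding v(2)[symmetric] by blast
      show ?thesis
      proof (cases "u = 1")
        case True
        have "c \<in> lev B \<beta>"
          by (rule mem_is_interval_1_I[OF iv \<open>w \<in> lev B \<beta>\<close> v(1)])
            (use True False \<open>c \<le> u * v\<close> in auto)
        then show ?thesis using True by simp
      next
        case False
        then have "u = -1" using u by simp
        have "- c \<in> lev B \<beta>"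
          by (rule mem_is_interval_1_I[OF iv v(1) \<open>w \<in> lev B \<beta>\<close>])
            (use \<open>u = -1\<close> \<open>\<not> c \<le> u * w\<close> \<open>c \<le> u * v\<close> in auto)
        then show ?thesis using \<open>u = -1\<close> by simp
      qed
    qed
    then have "\<beta> \<le> B (u * c)" if "\<beta> \<in> {0<..<\<alpha>}" for \<beta>
      using that by (auto simp: lev_def)
    then have "\<alpha> \<le> B (u * c)" using dense_le_bounded[of 0 \<alpha> "B (u * c)"] \<alpha> by auto
    then have "u * (u * c) \<le> supp_fun B u \<alpha>"
      using supp_fun_ge[OF B] \<alpha> by (auto simp: lev_def)
    then show ?thesis using u by auto
  qed
qed

lemma abs_supp_fun_le_norm0:
  assumes B: "B \<in> Fc" and u: "u \<in> {-1, 1}" and \<alpha>: "\<alpha> \<in> {0..1}"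
  shows "\<bar>supp_fun B u \<alpha>\<bar> \<le> norm0 B"
proof -
  obtain v where v: "v \<in> lev B \<alpha>" "supp_fun B u \<alpha> = u * v"
    using supp_fun_attained[OF B \<alpha>] by auto
  have "v \<in> lev B 0"
    using v lev_antimono[of 0 \<alpha> B] \<alpha> by (cases "\<alpha> = 0") auto
  moreover have "compact (abs ` lev B 0)"
    by (rule compact_continuous_image) (auto intro!: continuous_intros Fc_levD[OF B])
  ultimately have "\<bar>v\<bar> \<le> norm0 B"
    unfolding norm0_def by (intro cSup_upper imageI bounded_imp_bdd_above compact_imp_bounded)
  then show ?thesis using v u by (auto simp: abs_mult)
qed

lemma supp_fun_add_nonneg:
  assumes "B \<in> Fc" "\<alpha> \<in> {0..1}"
  shows "0 \<le> supp_fun B 1 \<alpha> + supp_fun B (-1) \<alpha>"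
proof -
  obtain v where "v \<in> lev B \<alpha>" using Fc_levD(1)[OF assms] by auto
  from supp_fun_ge[OF assms this, of 1] supp_fun_ge[OF assms this, of "-1"] show ?thesis by simp
qed

section \<open>Antitone left-continuous functions on \<open>[0,1]\<close>\<close>

text \<open>For an antitone function the second clause is left continuity on \<open>(0,1]\<close>.\<close>
definition left_cont_antimono :: "(real \<Rightarrow> real) \<Rightarrow> bool" where
  "left_cont_antimono f \<longleftrightarrow> antimono_on {0..1} f \<and>
     (\<forall>\<alpha>\<in>{0<..1}. \<forall>c. (\<forall>\<beta>\<in>{0<..<\<alpha>}. c \<le> f \<beta>) \<longrightarrow> c \<le> f \<alpha>)"

lemma left_cont_antimonoI:
  assumes "\<And>\<alpha> \<beta>. 0 \<le> \<alpha> \<Longrightarrow> \<alpha> \<le> \<beta> \<Longrightarrow> \<beta> \<le> 1 \<Longrightarrow> f \<beta> \<le> f \<alpha>"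
    and "\<And>\<alpha> c. 0 < \<alpha> \<Longrightarrow> \<alpha> \<le> 1 \<Longrightarrow> \<forall>\<beta>\<in>{0<..<\<alpha>}. c \<le> f \<beta> \<Longrightarrow> c \<le> f \<alpha>"
  shows "left_cont_antimono f"
  using assms unfolding left_cont_antimono_def by (auto intro!: monotone_onI)

lemma left_cont_antimonoD:
  assumes "left_cont_antimono f"
  shows "0 \<le> \<alpha> \<Longrightarrow> \<alpha> \<le> \<beta> \<Longrightarrow> \<beta> \<le> 1 \<Longrightarrow> f \<beta> \<le> f \<alpha>"
    and "0 < \<alpha> \<Longrightarrow> \<alpha> \<le> 1 \<Longrightarrow> \<forall>\<beta>\<in>{0<..<\<alpha>}. c \<le> f \<beta> \<Longrightarrow> c \<le> f \<alpha>"
  using assms unfolding left_cont_antimono_def monotone_on_def by auto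

lemma left_cont_antimono_supp_fun:
  "B \<in> Fc \<Longrightarrow> u \<in> {-1, 1} \<Longrightarrow> left_cont_antimono (supp_fun B u)"
  by (rule left_cont_antimonoI) (auto intro: supp_fun_antimono supp_fun_left_closed)

lemma left_cont_antimono_tendsto:
  assumes f: "left_cont_antimono f" and \<alpha>: "0 < \<alpha>" "\<alpha> \<le> 1"
  shows "(f \<longlongrightarrow> f \<alpha>) (at_left \<alpha>)"
  unfolding tendsto_iff
proof (intro allI impI)
  fix e :: real assume "0 < e"
  then have "\<not> (\<forall>\<beta>\<in>{0<..<\<alpha>}. f \<alpha> + e \<le> f \<beta>)"
    using left_cont_antimonoD(2)[OF f \<alpha>] by force
  then obtain \<beta>\<^sub>0 where \<beta>\<^sub>0: "\<beta>\<^sub>0 \<in> {0<..<\<alpha>}" "f \<beta>\<^sub>0 < f \<alpha> + e" by force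
  have "dist (f \<beta>) (f \<alpha>) < e" if "\<beta> \<in> {\<beta>\<^sub>0<..<\<alpha>}" for \<beta>
    using left_cont_antimonoD(1)[OF f, of \<beta> \<alpha>] left_cont_antimonoD(1)[OF f, of \<beta>\<^sub>0 \<beta>] that \<beta>\<^sub>0 \<alpha>
    by (auto simp: dist_real_def)
  then show "\<forall>\<^sub>F \<beta> in at_left \<alpha>. dist (f \<beta>) (f \<alpha>) < e"
    using eventually_at_left_real[of \<beta>\<^sub>0 \<alpha>] \<beta>\<^sub>0 by (auto elim: eventually_mono)
qed

text \<open>The largest point of the grid \<open>k/(n+1)\<close> strictly below \<open>\<alpha>\<close> (clipped to \<open>[0,1]\<close>). It takes
  countably many values, which makes the approximations \<open>f (grid_below n \<alpha>)\<close> of a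
  left-continuous \<open>f\<close> measurable in \<open>\<alpha>\<close> jointly with any other parameter.\<close>
definition grid_below :: "nat \<Rightarrow> real \<Rightarrow> real" where
  "grid_below n \<alpha> = min 1 (max 0 ((of_int \<lceil>real (Suc n) * \<alpha>\<rceil> - 1) / real (Suc n)))"

lemma grid_below_bounds:
  assumes "0 < \<alpha>" "\<alpha> \<le> 1"
  shows "0 \<le> grid_below n \<alpha>" "grid_below n \<alpha> < \<alpha>" "\<alpha> - inverse (real (Suc n)) \<le> grid_below n \<alpha>"
proof -
  let ?N = "real (Suc n)"
  have "of_int \<lceil>?N * \<alpha>\<rceil> < ?N * \<alpha> + 1" "?N * \<alpha> \<le> of_int \<lceil>?N * \<alpha>\<rceil>"
    by linarith+
  then have "(of_int \<lceil>?N * \<alpha>\<rceil> - 1) / ?N < \<alpha>" "\<alpha> - inverse ?N \<le> (of_int \<lceil>?N * \<alpha>\<rceil> - 1) / ?N"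
    by (simp_all add: divide_less_eq le_divide_eq inverse_eq_divide diff_divide_distrib algebra_simps)
  moreover have "\<alpha> - inverse ?N \<le> 1" using assms(2) inverse_positive_iff_positive[of ?N] by linarith
  ultimately show "0 \<le> grid_below n \<alpha>" "grid_below n \<alpha> < \<alpha>"
    "\<alpha> - inverse ?N \<le> grid_below n \<alpha>"
    using assms unfolding grid_below_def by auto
qed

lemma grid_below_tendsto:
  assumes "0 < \<alpha>" "\<alpha> \<le> 1"
  shows "filterlim (\<lambda>n. grid_below n \<alpha>) (at_left \<alpha>) sequentially"
proof -
  have "(\<lambda>n. grid_below n \<alpha>) \<longlonglongrightarrow> \<alpha>"
  proof (rule tendsto_sandwich[where f="\<lambda>n. \<alpha> + - inverse (real (Suc n))" and h="\<lambda>n. \<alpha>"])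
    show "\<forall>\<^sub>F n in sequentially. \<alpha> + - inverse (real (Suc n)) \<le> grid_below n \<alpha>"
      using grid_below_bounds(3)[OF assms] by simp
    show "\<forall>\<^sub>F n in sequentially. grid_below n \<alpha> \<le> \<alpha>"
      using grid_below_bounds(2)[OF assms] by (simp add: less_imp_le)
  qed (use LIMSEQ_inverse_real_of_nat_add_minus[of \<alpha>] in simp_all)
  then show ?thesis
    unfolding filterlim_at using grid_below_bounds(2)[OF assms]
    by (auto intro!: always_eventually simp: less_imp_neq)
qed

lemma left_cont_antimono_grid_LIMSEQ:
  assumes "left_cont_antimono f" "\<alpha> \<in> {0..1}"
  shows "(\<lambda>n. f (grid_below n \<alpha>)) \<longlonglongrightarrow> f \<alpha>"
proof (cases "\<alpha> = 0")
  case False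
  then have "0 < \<alpha>" "\<alpha> \<le> 1" using assms(2) by auto
  from filterlim_compose[OF left_cont_antimono_tendsto[OF assms(1) this] grid_below_tendsto[OF this]]
  show ?thesis .
qed (simp add: grid_below_def)

lemma measurable_left_cont_antimono_family:
  fixes F :: "real \<Rightarrow> 'a \<Rightarrow> real"
  assumes meas: "\<And>\<alpha>. \<alpha> \<in> {0..1} \<Longrightarrow> F \<alpha> \<in> borel_measurable M"
    and lc: "\<And>\<omega>. \<omega> \<in> space M \<Longrightarrow> left_cont_antimono (\<lambda>\<alpha>. F \<alpha> \<omega>)"
  shows "(\<lambda>z. indicator {0..1} (snd z) * F (snd z) (fst z)) \<in> borel_measurable (M \<Otimes>\<^sub>M lborel)"
proof (rule borel_measurable_LIMSEQ_real)
  let ?F = "\<lambda>n z. indicator {0..1::real} (snd z) * F (grid_below n (snd z)) (fst z)"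
  show "(\<lambda>n. ?F n z) \<longlonglongrightarrow> indicator {0..1} (snd z) * F (snd z) (fst z)"
    if "z \<in> space (M \<Otimes>\<^sub>M lborel)" for z
  proof (cases "snd z \<in> {0..1}")
    case True
    have "fst z \<in> space M" using that by (auto simp: space_pair_measure)
    then show ?thesis using True left_cont_antimono_grid_LIMSEQ[OF lc] by simp
  qed simp
  fix n
  define G where "G k z = indicator {0..1::real} (snd z) *
     F (min 1 (max 0 ((of_int k - 1) / real (Suc n)))) (fst z)" for k :: int and z
  have "(\<lambda>z. G \<lceil>real (Suc n) * snd z\<rceil> z) \<in> borel_measurable (M \<Otimes>\<^sub>M lborel)"
  proof (rule measurable_compose_countable'[where f=G and g="\<lambda>z. \<lceil>real (Suc n) * snd z\<rceil>" and I=UNIV])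
    fix k :: int assume "k \<in> UNIV"
    have "(\<lambda>z. F (min 1 (max 0 ((of_int k - 1) / real (Suc n)))) (fst z)) \<in> borel_measurable (M \<Otimes>\<^sub>M lborel)"
      by (rule measurable_compose[OF measurable_fst meas]) auto
    then show "G k \<in> borel_measurable (M \<Otimes>\<^sub>M lborel)"
      unfolding G_def by measurable
  qed auto
  then show "?F n \<in> borel_measurable (M \<Otimes>\<^sub>M lborel)"
    by (simp add: G_def grid_below_def)
qed

lemma borel_measurable_left_cont_antimono:
  assumes "left_cont_antimono f"
  shows "(\<lambda>\<alpha>. indicator {0..1} \<alpha> * f \<alpha>) \<in> borel_measurable lborel"
proof -
  have "(\<lambda>z. indicator {0..1} (snd z) * (\<lambda>\<alpha> (_::unit). f \<alpha>) (snd z) (fst z))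
      \<in> borel_measurable (count_space UNIV \<Otimes>\<^sub>M lborel)"
    by (rule measurable_left_cont_antimono_family) (use assms in auto)
  from measurable_Pair2[OF this, of "()"] show ?thesis by simp
qed

section \<open>Fuzzy sets with prescribed support functions\<close>

text \<open>The fuzzy set with levels \<open>[-q \<alpha>, p \<alpha>]\<close>; the \<open>0\<close> keeps the supremum meaningful at points
  outside every level.\<close>
definition fuzzy_of_supp :: "(real \<Rightarrow> real) \<Rightarrow> (real \<Rightarrow> real) \<Rightarrow> fuzzy" where
  "fuzzy_of_supp p q x = Sup (insert 0 {\<alpha> \<in> {0<..1}. - q \<alpha> \<le> x \<and> x \<le> p \<alpha>})"

lemma bdd_above_fuzzy_of_supp_set:
  "bdd_above (insert 0 {\<alpha> \<in> {0<..1::real}. - q \<alpha> \<le> x \<and> x \<le> p \<alpha>})"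
  by (rule bdd_aboveI[where M=1]) auto

lemma fuzzy_of_supp_bounds: "0 \<le> fuzzy_of_supp p q x" "fuzzy_of_supp p q x \<le> 1"
  unfolding fuzzy_of_supp_def
  by (auto intro!: cSup_upper cSup_least bdd_above_fuzzy_of_supp_set)

lemma lev_fuzzy_of_supp:
  assumes p: "left_cont_antimono p" and q: "left_cont_antimono q" and \<alpha>: "\<alpha> \<in> {0<..1}"
  shows "lev (fuzzy_of_supp p q) \<alpha> = {- q \<alpha> .. p \<alpha>}"
proof (intro set_eqI iffI)
  fix x assume "x \<in> {- q \<alpha> .. p \<alpha>}"
  then have "\<alpha> \<le> fuzzy_of_supp p q x"
    using \<alpha> unfolding fuzzy_of_supp_def by (intro cSup_upper bdd_above_fuzzy_of_supp_set) auto
  then show "x \<in> lev (fuzzy_of_supp p q) \<alpha>" using \<alpha> by (simp add: lev_def)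
next
  fix x assume "x \<in> lev (fuzzy_of_supp p q) \<alpha>"
  then have x: "\<alpha> \<le> fuzzy_of_supp p q x" using \<alpha> by (simp add: lev_def)
  have "- x \<le> q \<beta> \<and> x \<le> p \<beta>" if \<beta>: "\<beta> \<in> {0<..<\<alpha>}" for \<beta>
  proof -
    obtain \<gamma> where \<gamma>: "\<gamma> \<in> {0<..1}" "- q \<gamma> \<le> x" "x \<le> p \<gamma>" "\<beta> < \<gamma>"
      using less_cSupD[of "insert 0 {\<alpha> \<in> {0<..1}. - q \<alpha> \<le> x \<and> x \<le> p \<alpha>}" \<beta>] x \<beta>
      unfolding fuzzy_of_supp_def by force
    then show ?thesis
      using left_cont_antimonoD(1)[OF p, of \<beta> \<gamma>] left_cont_antimonoD(1)[OF q, of \<beta> \<gamma>] \<beta> by auto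
  qed
  then have "- x \<le> q \<alpha>" "x \<le> p \<alpha>"
    using left_cont_antimonoD(2)[OF p] left_cont_antimonoD(2)[OF q] \<alpha> by auto
  then show "x \<in> {- q \<alpha> .. p \<alpha>}" by auto
qed

lemma support_fuzzy_of_supp:
  assumes "left_cont_antimono p" "left_cont_antimono q"
  shows "{x. 0 < fuzzy_of_supp p q x} = (\<Union>\<alpha>\<in>{0<..1}. {- q \<alpha> .. p \<alpha>})"
proof (intro set_eqI iffI)
  fix x assume "x \<in> {x. 0 < fuzzy_of_supp p q x}"
  then show "x \<in> (\<Union>\<alpha>\<in>{0<..1}. {- q \<alpha> .. p \<alpha>})"
    using less_cSupD[of "insert 0 {\<alpha> \<in> {0<..1}. - q \<alpha> \<le> x \<and> x \<le> p \<alpha>}" 0]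
    unfolding fuzzy_of_supp_def by force
next
  fix x assume "x \<in> (\<Union>\<alpha>\<in>{0<..1}. {- q \<alpha> .. p \<alpha>})"
  then obtain \<alpha> where "\<alpha> \<in> {0<..1}" "x \<in> lev (fuzzy_of_supp p q) \<alpha>"
    using lev_fuzzy_of_supp[OF assms] by auto
  then show "x \<in> {x. 0 < fuzzy_of_supp p q x}" by (auto simp: lev_def)
qed

lemma fuzzy_of_supp_in_Fc:
  assumes p: "left_cont_antimono p" and q: "left_cont_antimono q"
    and nonneg: "\<And>\<alpha>. \<alpha> \<in> {0..1} \<Longrightarrow> 0 \<le> p \<alpha> + q \<alpha>"
  shows "fuzzy_of_supp p q \<in> Fc"
proof -
  let ?B = "fuzzy_of_supp p q" and ?I = "\<lambda>\<alpha>. {- q \<alpha> .. p \<alpha>}"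
  have mono: "q \<alpha> \<le> q 0" "p \<alpha> \<le> p 0" "q 1 \<le> q \<alpha>" "p 1 \<le> p \<alpha>" if "\<alpha> \<in> {0<..1}" for \<alpha>
    using left_cont_antimonoD(1)[OF p] left_cont_antimonoD(1)[OF q] that by auto
  have common: "p 1 \<in> ?I \<alpha>" if "\<alpha> \<in> {0<..1}" for \<alpha>
    using mono[OF that] nonneg[of 1] by auto
  have "connected (\<Union>(?I ` {0<..1}))"
  proof (rule connected_Union)
    show "\<Inter>(?I ` {0<..1}) \<noteq> {}" using common by blast
  qed (auto simp: is_interval_connected_1[symmetric])
  then have "is_interval (lev ?B 0)"
    by (simp add: lev_def support_fuzzy_of_supp[OF p q] is_interval_connected_1
        connected_imp_connected_closure)
  moreover have "bounded (\<Union>(?I ` {0<..1}))"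
    by (rule bounded_subset[of "{- q 0 .. p 0}"]) (use mono in \<open>fastforce+\<close>)
  then have "compact (lev ?B 0)"
    by (simp add: lev_def support_fuzzy_of_supp[OF p q])
  moreover have "lev ?B 0 \<noteq> {}"
    using closure_subset common[of 1] by (force simp: lev_def support_fuzzy_of_supp[OF p q])
  moreover have "lev ?B \<alpha> \<noteq> {} \<and> compact (lev ?B \<alpha>) \<and> is_interval (lev ?B \<alpha>)" if "\<alpha> \<in> {0<..1}" for \<alpha>
    using common[OF that] by (auto simp: lev_fuzzy_of_supp[OF p q that] is_interval_cc)
  ultimately show ?thesis
    unfolding Fc_def using fuzzy_of_supp_bounds by (auto simp: less_eq_real_def)
qed

lemma supp_fun_fuzzy_of_supp:
  assumes "left_cont_antimono p" "left_cont_antimono q" "\<alpha> \<in> {0<..1}" "- q \<alpha> \<le> p \<alpha>"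
  shows "supp_fun (fuzzy_of_supp p q) 1 \<alpha> = p \<alpha>" "supp_fun (fuzzy_of_supp p q) (-1) \<alpha> = q \<alpha>"
proof -
  have "(\<lambda>v. - 1 * v) ` {- q \<alpha> .. p \<alpha>} = {- p \<alpha> .. q \<alpha>}" by simp
  then show "supp_fun (fuzzy_of_supp p q) 1 \<alpha> = p \<alpha>" "supp_fun (fuzzy_of_supp p q) (-1) \<alpha> = q \<alpha>"
    using assms by (simp_all add: supp_fun_def lev_fuzzy_of_supp)
qed

section \<open>Expected \<open>\<rho>\<^sub>1\<close>-distance\<close>

lemma fuzzy_rv_in_Fc: "fuzzy_rv M X \<Longrightarrow> \<omega> \<in> space M \<Longrightarrow> X \<omega> \<in> Fc"
  by (simp add: fuzzy_rv_def)

text \<open>\<open>s\<^sub>X(u,\<alpha>) < c\<close> iff the random compact set \<open>X\<^sub>\<alpha>\<close> misses every compact set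
  \<open>{v. c \<le> u v} \<inter> [-n, n]\<close>.\<close>
lemma borel_measurable_supp_fun_rv:
  assumes X: "fuzzy_rv M X" and \<alpha>: "\<alpha> \<in> {0..1}"
  shows "(\<lambda>\<omega>. supp_fun (X \<omega>) u \<alpha>) \<in> borel_measurable M"
  unfolding borel_measurable_iff_less
proof
  fix c :: real
  define K where "K n = {v. c \<le> u * v} \<inter> {- real n .. real n}" for n :: nat
  have "compact (K n)" for n
    unfolding K_def by (intro closed_Int_compact closed_Collect_le) (auto intro!: continuous_intros)
  then have hits: "{\<omega> \<in> space M. lev (X \<omega>) \<alpha> \<inter> K n \<noteq> {}} \<in> sets M" for n
    using X \<alpha> by (auto simp: fuzzy_rv_def random_compact_set_def)
  have "{\<omega> \<in> space M. supp_fun (X \<omega>) u \<alpha> < c} =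
      space M - (\<Union>n. {\<omega> \<in> space M. lev (X \<omega>) \<alpha> \<inter> K n \<noteq> {}})"
  proof (intro set_eqI iffI)
    fix \<omega> assume "\<omega> \<in> {\<omega> \<in> space M. supp_fun (X \<omega>) u \<alpha> < c}"
    then have \<omega>: "\<omega> \<in> space M" "supp_fun (X \<omega>) u \<alpha> < c" by auto
    have "\<not> c \<le> u * v" if "v \<in> lev (X \<omega>) \<alpha>" for v
      using supp_fun_ge[OF fuzzy_rv_in_Fc[OF X \<omega>(1)] \<alpha> that, of u] \<omega>(2) by auto
    then have "lev (X \<omega>) \<alpha> \<inter> K n = {}" for n by (auto simp: K_def)
    then show "\<omega> \<in> space M - (\<Union>n. {\<omega> \<in> space M. lev (X \<omega>) \<alpha> \<inter> K n \<noteq> {}})"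
      using \<omega>(1) by auto
  next
    fix \<omega> assume \<omega>: "\<omega> \<in> space M - (\<Union>n. {\<omega> \<in> space M. lev (X \<omega>) \<alpha> \<inter> K n \<noteq> {}})"
    then obtain v where v: "v \<in> lev (X \<omega>) \<alpha>" "supp_fun (X \<omega>) u \<alpha> = u * v"
      using supp_fun_attained[OF fuzzy_rv_in_Fc[OF X] \<alpha>] by blast
    obtain n :: nat where "\<bar>v\<bar> \<le> real n" using real_arch_simple by blast
    moreover have "v \<notin> K n" using \<omega> v(1) by auto
    ultimately have "\<not> c \<le> u * v" by (auto simp: K_def)
    then show "\<omega> \<in> {\<omega> \<in> space M. supp_fun (X \<omega>) u \<alpha> < c}" using \<omega> v(2) by auto
  qed
  also have "\<dots> \<in> sets M" using hits by auto
  finally show "{\<omega> \<in> space M. supp_fun (X \<omega>) u \<alpha> < c} \<in> sets M" .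
qed

lemma indicator_mult_abs_diff:
  "indicator S x * \<bar>a - b\<bar> = \<bar>indicator S x * a - indicator S x * (b :: real)\<bar>"
  by (auto split: split_indicator)

lemma measurable_supp_fun_dist_rv:
  assumes X: "fuzzy_rv M X" and B: "B \<in> Fc" and u: "u \<in> {-1, 1}"
  shows "(\<lambda>z. indicator {0..1} (snd z) * \<bar>supp_fun B u (snd z) - supp_fun (X (fst z)) u (snd z)\<bar>)
     \<in> borel_measurable (M \<Otimes>\<^sub>M lborel)"
proof -
  have "(\<lambda>z. indicator {0..1} (snd z) * (\<lambda>\<alpha> (_::'a). supp_fun B u \<alpha>) (snd z) (fst z))
      \<in> borel_measurable (M \<Otimes>\<^sub>M lborel)"
    by (rule measurable_left_cont_antimono_family) (use left_cont_antimono_supp_fun[OF B u] in auto)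
  moreover have "(\<lambda>z. indicator {0..1} (snd z) * (\<lambda>\<alpha> \<omega>. supp_fun (X \<omega>) u \<alpha>) (snd z) (fst z))
      \<in> borel_measurable (M \<Otimes>\<^sub>M lborel)"
    by (rule measurable_left_cont_antimono_family)
      (use borel_measurable_supp_fun_rv[OF X] left_cont_antimono_supp_fun fuzzy_rv_in_Fc[OF X] u in auto)
  ultimately show ?thesis unfolding indicator_mult_abs_diff by simp
qed

lemma integrable_supp_fun_dist:
  assumes B: "B \<in> Fc" and C: "C \<in> Fc" and u: "u \<in> {-1, 1}"
  shows "integrable lborel (\<lambda>\<alpha>. indicator {0..1} \<alpha> *\<^sub>R \<bar>supp_fun B u \<alpha> - supp_fun C u \<alpha>\<bar>)"
proof -
  have "(\<lambda>\<alpha>. indicator {0..1} \<alpha> * \<bar>supp_fun B u \<alpha> - supp_fun C u \<alpha>\<bar>) \<in> borel_measurable lborel"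
    unfolding indicator_mult_abs_diff
    using borel_measurable_left_cont_antimono[OF left_cont_antimono_supp_fun] B C u by simp
  then have "integrable lborel (\<lambda>\<alpha>. indicator {0..1} \<alpha> *\<^sub>R
      (indicator {0..1} \<alpha> * \<bar>supp_fun B u \<alpha> - supp_fun C u \<alpha>\<bar>))"
    using abs_supp_fun_le_norm0[OF B u] abs_supp_fun_le_norm0[OF C u]
    by (intro integrableI_bounded_set_indicator[where B="norm0 B + norm0 C"] AE_I2)
      (auto intro: order_trans[OF abs_triangle_ineq4 add_mono])
  moreover have "(\<lambda>\<alpha>. indicator {0..1} \<alpha> *\<^sub>R (indicator {0..1} \<alpha> * \<bar>supp_fun B u \<alpha> - supp_fun C u \<alpha>\<bar>))
      = (\<lambda>\<alpha>. indicator {0..1} \<alpha> *\<^sub>R \<bar>supp_fun B u \<alpha> - supp_fun C u \<alpha>\<bar>)"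
    by (auto split: split_indicator)
  ultimately show ?thesis by simp
qed

lemma LBINT_supp_fun_dist_nonneg: "0 \<le> (LBINT \<alpha>:{0..1}. \<bar>supp_fun B u \<alpha> - supp_fun C u \<alpha>\<bar>)"
  unfolding set_lebesgue_integral_def by (intro integral_nonneg_AE AE_I2) (auto split: split_indicator)

lemma LBINT_supp_fun_dist_eq_nn_integral:
  assumes "B \<in> Fc" "C \<in> Fc" "u \<in> {-1, 1}"
  shows "ennreal (LBINT \<alpha>:{0..1}. \<bar>supp_fun B u \<alpha> - supp_fun C u \<alpha>\<bar>) =
    (\<integral>\<^sup>+\<alpha>. ennreal (indicator {0..1} \<alpha> * \<bar>supp_fun B u \<alpha> - supp_fun C u \<alpha>\<bar>) \<partial>lborel)"
proof -
  have "(\<integral>\<^sup>+\<alpha>. ennreal (indicator {0..1} \<alpha> *\<^sub>R \<bar>supp_fun B u \<alpha> - supp_fun C u \<alpha>\<bar>) \<partial>lborel)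
    = ennreal (integral\<^sup>L lborel (\<lambda>\<alpha>. indicator {0..1} \<alpha> *\<^sub>R \<bar>supp_fun B u \<alpha> - supp_fun C u \<alpha>\<bar>))"
    by (rule nn_integral_eq_integral[OF integrable_supp_fun_dist[OF assms]])
      (auto split: split_indicator)
  then show ?thesis by (simp add: set_lebesgue_integral_def)
qed

lemma rho1_nn_integral:
  assumes "B \<in> Fc" "C \<in> Fc"
  shows "ennreal (rho1 B C) = (\<Sum>u\<in>{-1,1}. ennreal (1/2) *
     (\<integral>\<^sup>+\<alpha>. ennreal (indicator {0..1} \<alpha> * \<bar>supp_fun B u \<alpha> - supp_fun C u \<alpha>\<bar>) \<partial>lborel))"
proof -
  have "ennreal (rho1 B C) = (\<Sum>u\<in>{-1,1}.
      ennreal ((1/2) * (LBINT \<alpha>:{0..1}. \<bar>supp_fun B u \<alpha> - supp_fun C u \<alpha>\<bar>)))"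
    unfolding rho1_def by (intro sum_ennreal[symmetric] mult_nonneg_nonneg LBINT_supp_fun_dist_nonneg) auto
  also have "\<dots> = (\<Sum>u\<in>{-1,1}.
      ennreal (1/2) * ennreal (LBINT \<alpha>:{0..1}. \<bar>supp_fun B u \<alpha> - supp_fun C u \<alpha>\<bar>))"
    by (rule sum.cong[OF refl], rule ennreal_mult) (auto intro: LBINT_supp_fun_dist_nonneg)
  also have "\<dots> = (\<Sum>u\<in>{-1,1}. ennreal (1/2) *
     (\<integral>\<^sup>+\<alpha>. ennreal (indicator {0..1} \<alpha> * \<bar>supp_fun B u \<alpha> - supp_fun C u \<alpha>\<bar>) \<partial>lborel))"
    using LBINT_supp_fun_dist_eq_nn_integral[OF assms] by (intro sum.cong) auto
  finally show ?thesis .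
qed

lemma nn_integral_rho1_rv:
  assumes "prob_space M" and X: "fuzzy_rv M X" and B: "B \<in> Fc"
  shows "(\<integral>\<^sup>+\<omega>. ennreal (rho1 B (X \<omega>)) \<partial>M) = (\<Sum>u\<in>{-1,1}. ennreal (1/2) *
     (\<integral>\<^sup>+\<alpha>. (\<integral>\<^sup>+\<omega>. ennreal (indicator {0..1} \<alpha> * \<bar>supp_fun B u \<alpha> - supp_fun (X \<omega>) u \<alpha>\<bar>) \<partial>M) \<partial>lborel))"
proof -
  interpret pair_sigma_finite M lborel
    by (intro pair_sigma_finite.intro prob_space_imp_sigma_finite assms lborel.sigma_finite_measure_axioms)
  have meas: "case_prod (\<lambda>\<omega> \<alpha>. ennreal (indicator {0..1} \<alpha> * \<bar>supp_fun B u \<alpha> - supp_fun (X \<omega>) u \<alpha>\<bar>))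
     \<in> borel_measurable (M \<Otimes>\<^sub>M lborel)" if "u \<in> {-1, 1}" for u
    using measurable_supp_fun_dist_rv[OF X B that] by (simp add: split_beta')
  have "(\<integral>\<^sup>+\<omega>. ennreal (rho1 B (X \<omega>)) \<partial>M) = (\<Sum>u\<in>{-1,1}. ennreal (1/2) * (\<integral>\<^sup>+\<omega>.
     (\<integral>\<^sup>+\<alpha>. ennreal (indicator {0..1} \<alpha> * \<bar>supp_fun B u \<alpha> - supp_fun (X \<omega>) u \<alpha>\<bar>) \<partial>lborel) \<partial>M))"
    using meas
    by (simp add: rho1_nn_integral[OF B fuzzy_rv_in_Fc[OF X]] nn_integral_add nn_integral_cmult
        lborel.borel_measurable_nn_integral cong: nn_integral_cong)
  also have "\<dots> = (\<Sum>u\<in>{-1,1}. ennreal (1/2) *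
     (\<integral>\<^sup>+\<alpha>. (\<integral>\<^sup>+\<omega>. ennreal (indicator {0..1} \<alpha> * \<bar>supp_fun B u \<alpha> - supp_fun (X \<omega>) u \<alpha>\<bar>) \<partial>M) \<partial>lborel))"
    using Fubini'[OF meas] by simp
  finally show ?thesis .
qed

text \<open>Both sides of \<open>\<rho>\<^sub>1(A,V) \<le> \<rho>\<^sub>1(A,U) + \<rho>\<^sub>1(U,V)\<close> are integrals of pointwise
  triangle inequalities, so equality forces equality almost everywhere.\<close>
lemma rho1_between_AE:
  assumes A: "A \<in> Fc" and U: "U \<in> Fc" and V: "V \<in> Fc"
    and between: "rho1 A V = rho1 A U + rho1 U V" and u: "u \<in> {-1, 1}"
  shows "AE \<alpha> in lborel. \<alpha> \<in> {0..1} \<longrightarrow>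
     \<bar>supp_fun A u \<alpha> - supp_fun V u \<alpha>\<bar> = \<bar>supp_fun A u \<alpha> - supp_fun U u \<alpha>\<bar> + \<bar>supp_fun U u \<alpha> - supp_fun V u \<alpha>\<bar>"
proof -
  define f where "f B C u \<alpha> = indicator {0..1} \<alpha> *\<^sub>R \<bar>supp_fun B u \<alpha> - supp_fun C u \<alpha>\<bar>" for B C u \<alpha>
  define d where "d u \<alpha> = f A U u \<alpha> + f U V u \<alpha> - f A V u \<alpha>" for u \<alpha>
  have f_int: "integrable lborel (f B C u)" if "B \<in> Fc" "C \<in> Fc" "u \<in> {-1, 1}" for B C u
    unfolding f_def by (rule integrable_supp_fun_dist[OF that])
  have d_int: "integrable lborel (d u)"
    and integral_d: "integral\<^sup>L lborel (d u) =
      integral\<^sup>L lborel (f A U u) + integral\<^sup>L lborel (f U V u) - integral\<^sup>L lborel (f A V u)"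
    if "u \<in> {-1, 1}" for u
    unfolding d_def using f_int[OF A U that] f_int[OF U V that] f_int[OF A V that] by auto
  have d_nonneg: "0 \<le> d u \<alpha>" for u \<alpha>
    unfolding d_def f_def by (auto split: split_indicator)
  have rho1_eq: "rho1 B C = (1/2) * integral\<^sup>L lborel (f B C (-1)) + (1/2) * integral\<^sup>L lborel (f B C 1)"
    for B C
    unfolding rho1_def set_lebesgue_integral_def f_def by simp
  have "integral\<^sup>L lborel (d (-1)) + integral\<^sup>L lborel (d 1) = 0"
    using between unfolding rho1_eq integral_d[of "-1", simplified] integral_d[of 1, simplified] by simp
  moreover have integral_d_nonneg: "0 \<le> integral\<^sup>L lborel (d u)" for u
    using d_nonneg by (intro integral_nonneg_AE) auto
  ultimately have "integral\<^sup>L lborel (d u) = 0"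
    using u add_nonneg_eq_0_iff[OF integral_d_nonneg integral_d_nonneg] by auto
  then have "AE \<alpha> in lborel. d u \<alpha> = 0"
    using integral_nonneg_eq_0_iff_AE[OF d_int[OF u]] d_nonneg by auto
  then show ?thesis
    by (rule AE_mp) (auto simp: d_def f_def intro!: AE_I2)
qed

section \<open>Medians and mean absolute deviation\<close>

text \<open>The largest median.\<close>
definition median :: "real measure \<Rightarrow> real" where
  "median N = Sup {t. measure N {..<t} \<le> 1/2}"

context real_distribution
begin

lemma measure_lessThan_mono: "s \<le> t \<Longrightarrow> measure M {..<s} \<le> measure M {..<t}"
  by (intro finite_measure_mono) auto

lemma measure_lessThan_le_cdf: "measure M {..<t} \<le> cdf M t"
  unfolding cdf_def by (intro finite_measure_mono) auto

lemma cdf_le_measure_lessThan: "s < t \<Longrightarrow> cdf M s \<le> measure M {..<t}"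
  unfolding cdf_def by (intro finite_measure_mono) auto

lemma median_set_nonempty: "{t. measure M {..<t} \<le> 1/2} \<noteq> {}"
proof -
  have "\<forall>\<^sub>F t in at_bot. cdf M t < 1/2"
    using cdf_lim_at_bot by (rule order_tendstoD) simp
  then obtain t where "cdf M t < 1/2" by (auto simp: eventually_at_bot_linorder)
  then have "measure M {..<t} \<le> 1/2" using measure_lessThan_le_cdf[of t] by linarith
  then show ?thesis by blast
qed

lemma median_set_bdd_above: "bdd_above {t. measure M {..<t} \<le> 1/2}"
proof -
  have "\<forall>\<^sub>F t in at_top. 1/2 < cdf M t"
    using cdf_lim_at_top_prob by (rule order_tendstoD) simp
  then obtain T where T: "1/2 < cdf M T" by (auto simp: eventually_at_top_linorder)
  have "t \<le> T" if "measure M {..<t} \<le> 1/2" for t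
    using cdf_le_measure_lessThan[of T t] T that by (cases "t \<le> T") auto
  then show ?thesis by (intro bdd_aboveI) blast
qed

lemma measure_lessThan_below_median: "t < median M \<Longrightarrow> measure M {..<t} \<le> 1/2"
  using less_cSupD[OF median_set_nonempty] measure_lessThan_mono
  unfolding median_def by (metis less_imp_le mem_Collect_eq order_trans)

lemma measure_lessThan_above_median: "median M < t \<Longrightarrow> 1/2 < measure M {..<t}"
  using cSup_upper[OF _ median_set_bdd_above, of t] unfolding median_def by force

lemma measure_lessThan_median: "measure M {..<median M} \<le> 1/2"
proof (rule tendsto_upperbound[OF cdf_at_left])
  have "cdf M t \<le> 1/2" if "t < median M" for t
    using cdf_le_measure_lessThan[of t "(t + median M) / 2"]
      measure_lessThan_below_median[of "(t + median M) / 2"] that by auto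
  then show "\<forall>\<^sub>F t in at_left (median M). cdf M t \<le> 1/2"
    by (auto simp: eventually_at_left_field intro: exI[of _ "median M - 1"])
qed simp

lemma cdf_median: "1/2 \<le> cdf M (median M)"
proof (rule tendsto_lowerbound)
  show "(cdf M \<longlongrightarrow> cdf M (median M)) (at_right (median M))"
    using cdf_is_right_cont by (simp add: continuous_within)
  have "1/2 \<le> cdf M t" if "median M < t" for t
    using measure_lessThan_above_median[OF that] measure_lessThan_le_cdf[of t] by simp
  then show "\<forall>\<^sub>F t in at_right (median M). 1/2 \<le> cdf M t"
    by (auto simp: eventually_at_right_field intro: exI[of _ "median M + 1"])
qed simp

end

lemma median_mono:
  assumes "real_distribution N\<^sub>1" "real_distribution N\<^sub>2"
    and "\<And>t. measure N\<^sub>2 {..<t} \<le> measure N\<^sub>1 {..<t}"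
  shows "median N\<^sub>1 \<le> median N\<^sub>2"
  unfolding median_def
  by (intro cSup_subset_mono real_distribution.median_set_nonempty[OF assms(1)]
      real_distribution.median_set_bdd_above[OF assms(2)]) (use assms(3) in \<open>blast intro: order_trans\<close>)

context prob_space
begin

lemma measure_distr_lessThan:
  fixes Z :: "'a \<Rightarrow> real"
  assumes "Z \<in> borel_measurable M"
  shows "measure (distr M borel Z) {..<t} = prob {\<omega> \<in> space M. Z \<omega> < t}"
  using assms
  by (subst measure_distr) (auto intro!: arg_cong[where f=prob])

lemma cdf_distr:
  "Z \<in> borel_measurable M \<Longrightarrow> cdf (distr M borel Z) t = prob {\<omega> \<in> space M. Z \<omega> \<le> t}"
  unfolding cdf_def by (subst measure_distr) (auto intro!: arg_cong[where f=prob])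

lemma prob_less_median_le:
  "Z \<in> borel_measurable M \<Longrightarrow> prob {\<omega> \<in> space M. Z \<omega> < median (distr M borel Z)} \<le> 1/2"
  using real_distribution.measure_lessThan_median[OF real_distribution_distr]
  by (simp add: measure_distr_lessThan)

lemma prob_le_median_ge:
  "Z \<in> borel_measurable M \<Longrightarrow> 1/2 \<le> prob {\<omega> \<in> space M. Z \<omega> \<le> median (distr M borel Z)}"
  using real_distribution.cdf_median[OF real_distribution_distr] by (simp add: cdf_distr)

lemma prob_less_below_median:
  "Z \<in> borel_measurable M \<Longrightarrow> t < median (distr M borel Z) \<Longrightarrow> prob {\<omega> \<in> space M. Z \<omega> < t} \<le> 1/2"
  using real_distribution.measure_lessThan_below_median[OF real_distribution_distr]
  by (simp add: measure_distr_lessThan)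

lemma prob_less_above_median:
  "Z \<in> borel_measurable M \<Longrightarrow> median (distr M borel Z) < t \<Longrightarrow> 1/2 < prob {\<omega> \<in> space M. Z \<omega> < t}"
  using real_distribution.measure_lessThan_above_median[OF real_distribution_distr]
  by (simp add: measure_distr_lessThan)

lemma median_distr_mono:
  assumes [measurable]: "Z \<in> borel_measurable M" "W \<in> borel_measurable M"
    and "\<And>\<omega>. \<omega> \<in> space M \<Longrightarrow> Z \<omega> \<le> W \<omega>"
  shows "median (distr M borel Z) \<le> median (distr M borel W)"
  using assms(3)
  by (intro median_mono real_distribution_distr)
    (auto simp: measure_distr_lessThan intro!: finite_measure_mono intro: le_less_trans)

lemma median_distr_add_nonneg:
  assumes [measurable]: "Z \<in> borel_measurable M" "W \<in> borel_measurable M"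
    and nonneg: "\<And>\<omega>. \<omega> \<in> space M \<Longrightarrow> 0 \<le> Z \<omega> + W \<omega>"
  shows "0 \<le> median (distr M borel Z) + median (distr M borel W)"
proof (rule ccontr)
  define t where "t = (median (distr M borel Z) - median (distr M borel W)) / 2"
  assume "\<not> ?thesis"
  then have "median (distr M borel Z) < t" "median (distr M borel W) < - t"
    by (auto simp: t_def field_simps)
  then have "1/2 < prob {\<omega> \<in> space M. Z \<omega> < t}" "1/2 < prob {\<omega> \<in> space M. W \<omega> < - t}"
    using prob_less_above_median[OF assms(1)] prob_less_above_median[OF assms(2)] by blast+
  moreover have "{\<omega> \<in> space M. Z \<omega> < t} \<inter> {\<omega> \<in> space M. W \<omega> < - t} = {}"
    using nonneg by force
  then have "prob {\<omega> \<in> space M. Z \<omega> < t} + prob {\<omega> \<in> space M. W \<omega> < - t} \<le> 1"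
    using prob_le_1 by (subst finite_measure_Union[symmetric]) auto
  ultimately show False by simp
qed

lemma convex_on_mean_abs_dev:
  fixes Z :: "'a \<Rightarrow> real"
  assumes Z: "integrable M Z"
  shows "convex_on UNIV (\<lambda>t. \<integral>\<omega>. \<bar>t - Z \<omega>\<bar> \<partial>M)"
proof (rule convex_onI)
  fix l x y :: real assume l: "0 < l" "l < 1"
  have "\<bar>(1 - l) * x + l * y - z\<bar> \<le> (1 - l) * \<bar>x - z\<bar> + l * \<bar>y - z\<bar>" for z
  proof -
    have "\<bar>(1 - l) * x + l * y - z\<bar> = \<bar>(1 - l) * (x - z) + l * (y - z)\<bar>" by (simp add: algebra_simps)
    also have "\<dots> \<le> (1 - l) * \<bar>x - z\<bar> + l * \<bar>y - z\<bar>"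
      using l abs_triangle_ineq[of "(1 - l) * (x - z)" "l * (y - z)"] by (simp add: abs_mult)
    finally show ?thesis .
  qed
  then have "(\<integral>\<omega>. \<bar>(1 - l) * x + l * y - Z \<omega>\<bar> \<partial>M) \<le> (\<integral>\<omega>. (1 - l) * \<bar>x - Z \<omega>\<bar> + l * \<bar>y - Z \<omega>\<bar> \<partial>M)"
    using Z by (intro integral_mono) auto
  then show "(\<integral>\<omega>. \<bar>(1 - l) *\<^sub>R x + l *\<^sub>R y - Z \<omega>\<bar> \<partial>M)
      \<le> (1 - l) * (\<integral>\<omega>. \<bar>x - Z \<omega>\<bar> \<partial>M) + l * (\<integral>\<omega>. \<bar>y - Z \<omega>\<bar> \<partial>M)"
    using Z by simp
qed simp

lemma mean_abs_dev_le_max: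
  fixes Z :: "'a \<Rightarrow> real"
  assumes "integrable M Z" "min a b \<le> t" "t \<le> max a b"
  shows "(\<integral>\<omega>. \<bar>t - Z \<omega>\<bar> \<partial>M) \<le> max (\<integral>\<omega>. \<bar>a - Z \<omega>\<bar> \<partial>M) (\<integral>\<omega>. \<bar>b - Z \<omega>\<bar> \<partial>M)"
  using convex_on_le_max[OF convex_on_subset[OF convex_on_mean_abs_dev[OF assms(1)]], of "min a b" "max a b" t]
    assms(2,3) by (cases "a \<le> b") (auto simp: max.commute)

lemma mean_abs_dev_diff_ge:
  fixes Z :: "'a \<Rightarrow> real"
  assumes Z: "integrable M Z" and S: "S \<in> sets M"
    and bound: "\<And>\<omega>. \<omega> \<in> space M \<Longrightarrow> c * (2 * indicator S \<omega> - 1) \<le> \<bar>t - Z \<omega>\<bar> - \<bar>m - Z \<omega>\<bar>"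
  shows "c * (2 * prob S - 1) \<le> (\<integral>\<omega>. \<bar>t - Z \<omega>\<bar> \<partial>M) - (\<integral>\<omega>. \<bar>m - Z \<omega>\<bar> \<partial>M)"
proof -
  have ind: "integrable M (indicator S :: 'a \<Rightarrow> real)"
    using S by (intro integrable_real_indicator) (auto simp: less_top[symmetric])
  then have "c * (2 * prob S - 1) = (\<integral>\<omega>. c * (2 * indicator S \<omega> - 1) \<partial>M)"
    using S by (simp add: prob_space Int_absorb2 sets.sets_into_space)
  also have "\<dots> \<le> (\<integral>\<omega>. \<bar>t - Z \<omega>\<bar> - \<bar>m - Z \<omega>\<bar> \<partial>M)"
    using Z ind bound by (intro integral_mono) auto
  also have "\<dots> = (\<integral>\<omega>. \<bar>t - Z \<omega>\<bar> \<partial>M) - (\<integral>\<omega>. \<bar>m - Z \<omega>\<bar> \<partial>M)"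
    using Z by (intro Bochner_Integration.integral_diff) auto
  finally show ?thesis .
qed

lemma mean_abs_dev_median_le:
  assumes Z: "integrable M Z"
  shows "(\<integral>\<omega>. \<bar>median (distr M borel Z) - Z \<omega>\<bar> \<partial>M) \<le> (\<integral>\<omega>. \<bar>t - Z \<omega>\<bar> \<partial>M)"
proof -
  let ?m = "median (distr M borel Z)"
  have [measurable]: "Z \<in> borel_measurable M" using Z by auto
  show ?thesis
  proof (cases "?m \<le> t")
    case True
    let ?S = "{\<omega> \<in> space M. Z \<omega> \<le> ?m}"
    have "(t - ?m) * (2 * prob ?S - 1) \<le> (\<integral>\<omega>. \<bar>t - Z \<omega>\<bar> \<partial>M) - (\<integral>\<omega>. \<bar>?m - Z \<omega>\<bar> \<partial>M)"
      using True by (intro mean_abs_dev_diff_ge Z) (auto split: split_indicator)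
    moreover have "0 \<le> (t - ?m) * (2 * prob ?S - 1)"
      using True prob_le_median_ge[of Z] by simp
    ultimately show ?thesis by simp
  next
    case False
    let ?S = "{\<omega> \<in> space M. ?m \<le> Z \<omega>}"
    have "(?m - t) * (2 * prob ?S - 1) \<le> (\<integral>\<omega>. \<bar>t - Z \<omega>\<bar> \<partial>M) - (\<integral>\<omega>. \<bar>?m - Z \<omega>\<bar> \<partial>M)"
      using False by (intro mean_abs_dev_diff_ge Z) (auto split: split_indicator)
    moreover have "prob ?S = 1 - prob {\<omega> \<in> space M. Z \<omega> < ?m}"
      by (subst prob_compl[symmetric]) (auto intro!: arg_cong[where f=prob])
    then have "0 \<le> (?m - t) * (2 * prob ?S - 1)"
      using False prob_less_median_le[of Z] by simp
    ultimately show ?thesis by simp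
  qed
qed

lemma incseq_tendsto_from_below:
  fixes \<alpha> :: real
  assumes "0 < \<alpha>"
  obtains g where "\<And>n. g n \<in> {0<..<\<alpha>}" "incseq g" "g \<longlonglongrightarrow> \<alpha>"
proof
  define g where "g n = \<alpha> - \<alpha> * inverse (real (Suc (Suc n)))" for n
  show "g n \<in> {0<..<\<alpha>}" for n
    using assms by (auto simp: g_def field_simps add_pos_nonneg)
  show "incseq g"
    unfolding g_def incseq_def using assms by (auto intro!: mult_left_mono le_imp_inverse_le)
  have "(\<lambda>n. inverse (real (Suc (Suc n)))) \<longlonglongrightarrow> 0"
    using LIMSEQ_Suc[OF LIMSEQ_inverse_real_of_nat] .
  from tendsto_diff[OF tendsto_const tendsto_mult[OF tendsto_const this], of \<alpha> \<alpha>]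
  show "g \<longlonglongrightarrow> \<alpha>" by (simp add: g_def[abs_def])
qed

lemma prob_less_left_closed:
  fixes Z :: "real \<Rightarrow> 'a \<Rightarrow> real"
  assumes meas: "\<And>\<alpha>. \<alpha> \<in> {0..1} \<Longrightarrow> Z \<alpha> \<in> borel_measurable M"
    and lc: "\<And>\<omega>. \<omega> \<in> space M \<Longrightarrow> left_cont_antimono (\<lambda>\<alpha>. Z \<alpha> \<omega>)"
    and \<alpha>: "0 < \<alpha>" "\<alpha> \<le> 1"
    and below: "\<And>\<beta>. \<beta> \<in> {0<..<\<alpha>} \<Longrightarrow> prob {\<omega> \<in> space M. Z \<beta> \<omega> < t} \<le> p"
  shows "prob {\<omega> \<in> space M. Z \<alpha> \<omega> < t} \<le> p"
proof -
  obtain g where g: "\<And>n. g n \<in> {0<..<\<alpha>}" and "incseq g" and g_lim: "g \<longlonglongrightarrow> \<alpha>"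
    using incseq_tendsto_from_below[OF \<alpha>(1)] by blast
  let ?A = "\<lambda>n. {\<omega> \<in> space M. Z (g n) \<omega> < t}"
  have Z_le: "Z \<beta> \<omega> \<le> Z \<gamma> \<omega>" if "\<omega> \<in> space M" "0 \<le> \<gamma>" "\<gamma> \<le> \<beta>" "\<beta> \<le> 1" for \<omega> \<beta> \<gamma>
    using left_cont_antimonoD(1)[OF lc] that by blast
  have incseq: "incseq ?A"
  proof (intro monoI subsetI)
    fix m n :: nat and \<omega> assume "m \<le> n" "\<omega> \<in> ?A m"
    moreover have "Z (g n) \<omega> \<le> Z (g m) \<omega>" if "\<omega> \<in> space M"
      using Z_le[OF that] \<open>incseq g\<close> \<open>m \<le> n\<close> g[of m] g[of n] \<alpha> by (auto simp: incseq_def)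
    ultimately show "\<omega> \<in> ?A n" by auto
  qed
  have "range ?A \<subseteq> sets M"
  proof -
    have [measurable]: "Z (g n) \<in> borel_measurable M" for n using meas g[of n] \<alpha> by auto
    show ?thesis by auto
  qed
  then have "(\<lambda>n. prob (?A n)) \<longlonglongrightarrow> prob (\<Union>n. ?A n)"
    using incseq by (intro Lim_measure_incseq) auto
  moreover have "(\<Union>n. ?A n) = {\<omega> \<in> space M. Z \<alpha> \<omega> < t}"
  proof (intro set_eqI iffI)
    fix \<omega> assume "\<omega> \<in> (\<Union>n. ?A n)"
    then obtain n where "\<omega> \<in> space M" "Z (g n) \<omega> < t" by auto
    moreover have "Z \<alpha> \<omega> \<le> Z (g n) \<omega>"
      using Z_le[OF \<open>\<omega> \<in> space M\<close>] g[of n] \<alpha> by auto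
    ultimately show "\<omega> \<in> {\<omega> \<in> space M. Z \<alpha> \<omega> < t}" by auto
  next
    fix \<omega> assume \<omega>: "\<omega> \<in> {\<omega> \<in> space M. Z \<alpha> \<omega> < t}"
    then obtain \<beta> where \<beta>: "\<beta> \<in> {0<..<\<alpha>}" "Z \<beta> \<omega> < t"
      using left_cont_antimonoD(2)[OF lc \<alpha>, of \<omega> t] by force
    then have "\<beta> < \<alpha>" by simp
    then obtain n where "\<beta> < g n"
      using order_tendstoD(1)[OF g_lim] by (auto simp: eventually_sequentially)
    then have "Z (g n) \<omega> \<le> Z \<beta> \<omega>"
      using Z_le \<omega> \<beta>(1) g[of n] \<alpha> by auto
    then show "\<omega> \<in> (\<Union>n. ?A n)" using \<omega> \<beta>(2) by (auto intro: le_less_trans)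
  qed
  ultimately show ?thesis
    using below g by (intro LIMSEQ_le_const2) auto
qed

lemma left_cont_antimono_median:
  fixes Z :: "real \<Rightarrow> 'a \<Rightarrow> real"
  assumes meas: "\<And>\<alpha>. \<alpha> \<in> {0..1} \<Longrightarrow> Z \<alpha> \<in> borel_measurable M"
    and lc: "\<And>\<omega>. \<omega> \<in> space M \<Longrightarrow> left_cont_antimono (\<lambda>\<alpha>. Z \<alpha> \<omega>)"
  shows "left_cont_antimono (\<lambda>\<alpha>. median (distr M borel (Z \<alpha>)))"
proof (rule left_cont_antimonoI)
  fix \<alpha> \<beta> :: real assume "0 \<le> \<alpha>" "\<alpha> \<le> \<beta>" "\<beta> \<le> 1"
  then show "median (distr M borel (Z \<beta>)) \<le> median (distr M borel (Z \<alpha>))"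
    using left_cont_antimonoD(1)[OF lc] meas by (intro median_distr_mono) auto
next
  fix \<alpha> c :: real
  assume \<alpha>: "0 < \<alpha>" "\<alpha> \<le> 1" and above: "\<forall>\<beta>\<in>{0<..<\<alpha>}. c \<le> median (distr M borel (Z \<beta>))"
  show "c \<le> median (distr M borel (Z \<alpha>))"
  proof (rule ccontr)
    define t where "t = (median (distr M borel (Z \<alpha>)) + c) / 2"
    assume "\<not> ?thesis"
    then have "median (distr M borel (Z \<alpha>)) < t" "t < c" by (auto simp: t_def)
    have "prob {\<omega> \<in> space M. Z \<alpha> \<omega> < t} \<le> 1/2"
    proof (rule prob_less_left_closed[OF meas lc \<alpha>])
      fix \<beta> assume "\<beta> \<in> {0<..<\<alpha>}"
      then have "t < median (distr M borel (Z \<beta>))"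
        using above \<open>t < c\<close> by (meson less_le_trans)
      then show "prob {\<omega> \<in> space M. Z \<beta> \<omega> < t} \<le> 1/2"
        using \<open>\<beta> \<in> {0<..<\<alpha>}\<close> \<alpha> meas by (intro prob_less_below_median) auto
    qed
    then show False
      using prob_less_above_median[OF _ \<open>median (distr M borel (Z \<alpha>)) < t\<close>] meas \<alpha> by auto
  qed
qed

end

section \<open>The depth \<open>D\<^sub>1\<close>\<close>

lemma D1_bounds: "0 \<le> D1 M X B" "D1 M X B \<le> 1"
  unfolding D1_def Let_def
  using enn2real_nonneg[of "\<integral>\<^sup>+\<omega>. ennreal (rho1 B (X \<omega>)) \<partial>M"] by (auto simp: divide_le_eq)

lemma D1_antimono:
  assumes "(\<integral>\<^sup>+\<omega>. ennreal (rho1 B (X \<omega>)) \<partial>M) \<le> (\<integral>\<^sup>+\<omega>. ennreal (rho1 C (X \<omega>)) \<partial>M)"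
  shows "D1 M X C \<le> D1 M X B"
  using assms unfolding D1_def Let_def
  by (cases "\<integral>\<^sup>+\<omega>. ennreal (rho1 B (X \<omega>)) \<partial>M" rule: ennreal_cases;
      cases "\<integral>\<^sup>+\<omega>. ennreal (rho1 C (X \<omega>)) \<partial>M" rule: ennreal_cases)
    (auto simp: divide_simps top_unique)

lemma D1_le_imp_le:
  assumes "D1 M X C \<le> D1 M X B" "(\<integral>\<^sup>+\<omega>. ennreal (rho1 B (X \<omega>)) \<partial>M) \<noteq> \<infinity>"
  shows "(\<integral>\<^sup>+\<omega>. ennreal (rho1 B (X \<omega>)) \<partial>M) \<le> (\<integral>\<^sup>+\<omega>. ennreal (rho1 C (X \<omega>)) \<partial>M)"
  using assms unfolding D1_def Let_def
  by (cases "\<integral>\<^sup>+\<omega>. ennreal (rho1 B (X \<omega>)) \<partial>M" rule: ennreal_cases;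
      cases "\<integral>\<^sup>+\<omega>. ennreal (rho1 C (X \<omega>)) \<partial>M" rule: ennreal_cases)
    (auto simp: divide_simps)

locale integrable_fuzzy_rv = prob_space M for M :: "'w measure" +
  fixes X :: "'w \<Rightarrow> fuzzy"
  assumes fuzzy_rv: "fuzzy_rv M X"
    and norm0_finite: "(\<integral>\<^sup>+\<omega>. ennreal (norm0 (X \<omega>)) \<partial>M) < \<infinity>"
begin

abbreviation supp_X :: "real \<Rightarrow> real \<Rightarrow> 'w \<Rightarrow> real" where
  "supp_X u \<alpha> \<equiv> \<lambda>\<omega>. supp_fun (X \<omega>) u \<alpha>"

definition median_supp :: "real \<Rightarrow> real \<Rightarrow> real" where
  "median_supp u \<alpha> = median (distr M borel (supp_X u \<alpha>))"

definition fuzzy_median :: fuzzy where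
  "fuzzy_median = fuzzy_of_supp (median_supp 1) (median_supp (-1))"

definition expected_rho1 :: "fuzzy \<Rightarrow> ennreal" where
  "expected_rho1 B = (\<integral>\<^sup>+\<omega>. ennreal (rho1 B (X \<omega>)) \<partial>M)"

definition mean_dev :: "fuzzy \<Rightarrow> real \<Rightarrow> real \<Rightarrow> ennreal" where
  "mean_dev B u \<alpha> = (\<integral>\<^sup>+\<omega>. ennreal (indicator {0..1} \<alpha> * \<bar>supp_fun B u \<alpha> - supp_X u \<alpha> \<omega>\<bar>) \<partial>M)"

lemma borel_measurable_supp_X [measurable]: "\<alpha> \<in> {0..1} \<Longrightarrow> supp_X u \<alpha> \<in> borel_measurable M"
  by (rule borel_measurable_supp_fun_rv[OF fuzzy_rv])

lemma integrable_supp_X: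
  assumes u: "u \<in> {-1, 1}" and \<alpha>: "\<alpha> \<in> {0..1}"
  shows "integrable M (supp_X u \<alpha>)"
proof (rule integrableI_bounded)
  have "(\<integral>\<^sup>+\<omega>. ennreal (norm (supp_X u \<alpha> \<omega>)) \<partial>M) \<le> (\<integral>\<^sup>+\<omega>. ennreal (norm0 (X \<omega>)) \<partial>M)"
    using abs_supp_fun_le_norm0[OF fuzzy_rv_in_Fc[OF fuzzy_rv] u \<alpha>]
    by (intro nn_integral_mono ennreal_leI) auto
  then show "(\<integral>\<^sup>+\<omega>. ennreal (norm (supp_X u \<alpha> \<omega>)) \<partial>M) < \<infinity>"
    using norm0_finite by simp
qed (use \<alpha> in simp)

lemma mean_dev_eq:
  assumes "u \<in> {-1, 1}"
  shows "mean_dev B u \<alpha> = ennreal (indicator {0..1} \<alpha> * (\<integral>\<omega>. \<bar>supp_fun B u \<alpha> - supp_X u \<alpha> \<omega>\<bar> \<partial>M))"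
proof (cases "\<alpha> \<in> {0..1}")
  case True
  then show ?thesis
    unfolding mean_dev_def using integrable_supp_X[OF assms True]
    by (simp add: nn_integral_eq_integral)
qed (simp add: mean_dev_def)

lemma borel_measurable_mean_dev:
  assumes "B \<in> Fc" "u \<in> {-1, 1}"
  shows "mean_dev B u \<in> borel_measurable lborel"
proof -
  have "(\<lambda>(\<omega>, \<alpha>). ennreal (indicator {0..1} \<alpha> * \<bar>supp_fun B u \<alpha> - supp_X u \<alpha> \<omega>\<bar>))
      \<in> borel_measurable (M \<Otimes>\<^sub>M lborel)"
    using measurable_supp_fun_dist_rv[OF fuzzy_rv assms] by (simp add: split_beta')
  then have "(\<lambda>(\<alpha>, \<omega>). ennreal (indicator {0..1} \<alpha> * \<bar>supp_fun B u \<alpha> - supp_X u \<alpha> \<omega>\<bar>))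
      \<in> borel_measurable (lborel \<Otimes>\<^sub>M M)"
    by (subst measurable_pair_swap_iff) (simp add: split_beta')
  then show ?thesis unfolding mean_dev_def[abs_def] by (rule borel_measurable_nn_integral)
qed

lemma expected_rho1_eq:
  "B \<in> Fc \<Longrightarrow> expected_rho1 B = (\<Sum>u\<in>{-1,1}. ennreal (1/2) * (\<integral>\<^sup>+\<alpha>. mean_dev B u \<alpha> \<partial>lborel))"
  unfolding expected_rho1_def mean_dev_def by (rule nn_integral_rho1_rv[OF prob_space_axioms fuzzy_rv])

lemma expected_rho1_add:
  assumes "B \<in> Fc" "C \<in> Fc"
  shows "expected_rho1 B + expected_rho1 C =
    (\<Sum>u\<in>{-1,1}. ennreal (1/2) * (\<integral>\<^sup>+\<alpha>. mean_dev B u \<alpha> + mean_dev C u \<alpha> \<partial>lborel))"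
  using assms borel_measurable_mean_dev
  by (simp add: expected_rho1_eq nn_integral_add distrib_left add_ac)

lemma left_cont_antimono_median_supp: "u \<in> {-1, 1} \<Longrightarrow> left_cont_antimono (median_supp u)"
  unfolding median_supp_def[abs_def]
  using fuzzy_rv_in_Fc[OF fuzzy_rv] left_cont_antimono_supp_fun
  by (intro left_cont_antimono_median) auto

lemma median_supp_add_nonneg: "\<alpha> \<in> {0..1} \<Longrightarrow> 0 \<le> median_supp 1 \<alpha> + median_supp (-1) \<alpha>"
  unfolding median_supp_def
  using supp_fun_add_nonneg[OF fuzzy_rv_in_Fc[OF fuzzy_rv]] by (intro median_distr_add_nonneg) auto

lemma fuzzy_median_in_Fc: "fuzzy_median \<in> Fc"
  unfolding fuzzy_median_def
  using left_cont_antimono_median_supp median_supp_add_nonneg by (intro fuzzy_of_supp_in_Fc) auto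

lemma supp_fun_fuzzy_median:
  assumes "u \<in> {-1, 1}" "\<alpha> \<in> {0<..1}"
  shows "supp_fun fuzzy_median u \<alpha> = median_supp u \<alpha>"
  using supp_fun_fuzzy_of_supp[OF left_cont_antimono_median_supp left_cont_antimono_median_supp]
    median_supp_add_nonneg[of \<alpha>] assms
  unfolding fuzzy_median_def by force

text \<open>\<open>t \<mapsto> E|t - s\<^sub>X(u,\<alpha>)|\<close> is convex with minimum at the median, so at a point \<open>s\<^sub>U\<close>
  between \<open>s\<^sub>A\<close> and \<open>s\<^sub>V\<close> it is at most the larger of the two values, and the median value
  is at most the smaller one.\<close>
lemma mean_dev_between:
  assumes u: "u \<in> {-1, 1}" and \<alpha>: "\<alpha> \<in> {0<..1}"
    and between: "\<bar>supp_fun A u \<alpha> - supp_fun V u \<alpha>\<bar> =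
      \<bar>supp_fun A u \<alpha> - supp_fun U u \<alpha>\<bar> + \<bar>supp_fun U u \<alpha> - supp_fun V u \<alpha>\<bar>"
  shows "mean_dev U u \<alpha> + mean_dev fuzzy_median u \<alpha> \<le> mean_dev V u \<alpha> + mean_dev A u \<alpha>"
proof -
  let ?G = "\<lambda>t. \<integral>\<omega>. \<bar>t - supp_X u \<alpha> \<omega>\<bar> \<partial>M"
  have \<alpha>': "\<alpha> \<in> {0..1}" using \<alpha> by auto
  have "?G (supp_fun U u \<alpha>) \<le> max (?G (supp_fun A u \<alpha>)) (?G (supp_fun V u \<alpha>))"
    using between by (intro mean_abs_dev_le_max integrable_supp_X[OF u \<alpha>'])
      (auto simp: min_def max_def abs_if split: if_splits)
  moreover have "?G (median_supp u \<alpha>) \<le> ?G t" for t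
    unfolding median_supp_def by (rule mean_abs_dev_median_le[OF integrable_supp_X[OF u \<alpha>']])
  note this[of "supp_fun A u \<alpha>"] this[of "supp_fun V u \<alpha>"]
  ultimately have "?G (supp_fun U u \<alpha>) + ?G (median_supp u \<alpha>) \<le> ?G (supp_fun V u \<alpha>) + ?G (supp_fun A u \<alpha>)"
    by (smt (verit))
  then show ?thesis
    using \<alpha> by (simp add: mean_dev_eq[OF u] supp_fun_fuzzy_median[OF u \<alpha>] ennreal_plus[symmetric]
        integral_nonneg_AE del: ennreal_plus)
qed

lemma expected_rho1_between:
  assumes A: "A \<in> Fc" and U: "U \<in> Fc" and V: "V \<in> Fc"
    and between: "rho1 A V = rho1 A U + rho1 U V"
  shows "expected_rho1 U + expected_rho1 fuzzy_median \<le> expected_rho1 V + expected_rho1 A"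
proof -
  have "AE \<alpha> in lborel. mean_dev U u \<alpha> + mean_dev fuzzy_median u \<alpha> \<le> mean_dev V u \<alpha> + mean_dev A u \<alpha>"
    if u: "u \<in> {-1, 1}" for u
    using rho1_between_AE[OF A U V between u] AE_lborel_singleton[of 0]
  proof eventually_elim
    case (elim \<alpha>)
    show ?case
    proof (cases "\<alpha> \<in> {0..1}")
      case True
      then show ?thesis using elim mean_dev_between[OF u] by auto
    qed (simp add: mean_dev_eq[OF u])
  qed
  then show ?thesis
    unfolding expected_rho1_add[OF U fuzzy_median_in_Fc] expected_rho1_add[OF V A]
    by (intro sum_mono mult_left_mono nn_integral_mono_AE) auto
qed

end

theorem theorem4p3:
  fixes M :: "'w measure" and X :: "'w \<Rightarrow> fuzzy"
  assumes "prob_space M"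
    and "fuzzy_rv M X"
    and "(\<integral>\<^sup>+ \<omega>. ennreal (norm0 (X \<omega>)) \<partial>M) < \<infinity>"
    and "A \<in> Fc"
    and "D1 M X A = (SUP B\<in>Fc. D1 M X B)"
    and "U \<in> Fc" and "V \<in> Fc"
    and "rho1 A V = rho1 A U + rho1 U V"
  shows "D1 M X A \<ge> D1 M X U \<and> D1 M X U \<ge> D1 M X V"
proof -
  interpret integrable_fuzzy_rv M X
    using assms(1-3) by (intro integrable_fuzzy_rv.intro integrable_fuzzy_rv_axioms.intro)
  have deepest: "D1 M X B \<le> D1 M X A" if "B \<in> Fc" for B
    unfolding assms(5) using D1_bounds that by (intro cSUP_upper bdd_aboveI) auto
  have "D1 M X V \<le> D1 M X U"
  proof (cases "expected_rho1 A = \<infinity>")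
    case True
    then have "D1 M X A = 0" by (simp add: D1_def expected_rho1_def)
    then show ?thesis using deepest[OF assms(7)] D1_bounds[of M X U] by simp
  next
    case False
    have "expected_rho1 A \<le> expected_rho1 fuzzy_median"
      using D1_le_imp_le[OF deepest[OF fuzzy_median_in_Fc]] False by (simp add: expected_rho1_def)
    then have "expected_rho1 A + expected_rho1 U \<le> expected_rho1 U + expected_rho1 fuzzy_median"
      by (simp add: add.commute add_right_mono)
    also have "\<dots> \<le> expected_rho1 V + expected_rho1 A"
      by (rule expected_rho1_between[OF assms(4,6,7,8)])
    finally have "expected_rho1 U \<le> expected_rho1 V"
      using False by (simp add: add.commute ennreal_add_left_cancel_le)
    then show ?thesis by (intro D1_antimono) (simp add: expected_rho1_def)
  qed
  then show ?thesis using deepest[OF assms(6)] by simp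
qed

end
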